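(* For every $k$-hyperdigraph $H$, $pc(H)\le \alpha(H)$.
   Context: For $2\le k\le n$, a $k$-hyperdigraph $H$ on $n$ vertices is a pair $(V,A)$ where $V$ is a set of $n$ vertices and $A$ is a set of $k$-tuples of distinct vertices (hyperarcs) such that for each $k$-subset $S\subseteq V$, $A$ contains at most one of the $k!$ orderings of $S$. For a hyperarc $a=(x_1\dots x_k)$, $x_i$ precedes $x_j$ in $a$ if $i<j$. A path is an alternating sequence $x_1a_1x_2\dots x_ma_mx_{m+1}$ ($m\ge 0$) of distinct vertices and distinct hyperarcs with $x_i$ preceding $x_{i+1}$ in $a_i$. The path covering number $pc(H)$ is the minimum number of vertex-disjoint paths (using distinct hyperarcs) covering $V$. A set $I\subseteq V$ is independent if no hyperarc of $H$ has all its vertices in $I$; the independence number $\alpha(H)$ is the maximum size of an independent set. *)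

theory Defs
  imports Main
begin

definition hyperdigraph :: "nat \<Rightarrow> 'a set \<Rightarrow> 'a list set \<Rightarrow> bool" where
  "hyperdigraph k V A \<longleftrightarrow> finite V \<and> 2 \<le> k \<and> k \<le> card V \<and>
     (\<forall>a\<in>A. length a = k \<and> distinct a \<and> set a \<subseteq> V) \<and>
     (\<forall>a\<in>A. \<forall>b\<in>A. set a = set b \<longrightarrow> a = b)"

definition precedes :: "'a \<Rightarrow> 'a \<Rightarrow> 'a list \<Rightarrow> bool" where
  "precedes x y a \<longleftrightarrow> (\<exists>i j. i < j \<and> j < length a \<and> a ! i = x \<and> a ! j = y)"

definition is_path :: "'a list set \<Rightarrow> 'a list \<times> 'a list list \<Rightarrow> bool" where
  "is_path A p \<longleftrightarrow> (case p of (xs, as) \<Rightarrow>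
     xs \<noteq> [] \<and> distinct xs \<and> distinct as \<and> length as + 1 = length xs \<and>
     set as \<subseteq> A \<and>
     (\<forall>i < length as. precedes (xs ! i) (xs ! Suc i) (as ! i)))"

definition path_cover :: "'a set \<Rightarrow> 'a list set \<Rightarrow> ('a list \<times> 'a list list) list \<Rightarrow> bool" where
  "path_cover V A P \<longleftrightarrow>
     (\<forall>p\<in>set P. is_path A p) \<and>
     (\<forall>i < length P. \<forall>j < length P. i \<noteq> j \<longrightarrow> set (fst (P ! i)) \<inter> set (fst (P ! j)) = {}) \<and>
     distinct (concat (map snd P)) \<and>
     (\<Union>p\<in>set P. set (fst p)) = V"

definition pc :: "'a set \<Rightarrow> 'a list set \<Rightarrow> nat" where
  "pc V A = (LEAST m. \<exists>P. path_cover V A P \<and> length P = m)"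

definition independent :: "'a list set \<Rightarrow> 'a set \<Rightarrow> bool" where
  "independent A I \<longleftrightarrow> (\<forall>a\<in>A. \<not> set a \<subseteq> I)"

definition alpha :: "'a set \<Rightarrow> 'a list set \<Rightarrow> nat" where
  "alpha V A = Max {card I | I. I \<subseteq> V \<and> independent A I}"

end

theory Submission
  imports Defs
begin

(* The Gallai-Milgram argument. Call a set of vertex- and arc-disjoint paths covering V a path
partition. If a path partition has more paths than any independent set has vertices, then there is
one with a path fewer whose end vertices are among the old end vertices; applied to a minimum path
partition this gives pc \<le> alpha.

The claim is proved by induction on |V|. The end vertices are not independent, so some hyperarc a
lies inside them. No path uses a, and its first two vertices u, w end two different paths P_u and
P_w. If P_w consists of w alone, append w to P_u through a. Otherwise remove w and the last arc b of
P_w, delete a and b from the hypergraph and apply induction to V - {w}: the new partition ends in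
old end vertices and possibly the new end v of P_w. If one of its paths ends in v, reattach w to it
through b; if one ends in u, through a. If neither happens, its end vertices miss both u and w, so
it has at least two paths fewer than the old one, a contradiction. *)

lemma distinct_concat_map_iff:
  assumes "distinct xs"
  shows "distinct (concat (map f xs)) \<longleftrightarrow>
    (\<forall>x\<in>set xs. distinct (f x)) \<and> pairwise (\<lambda>x y. disjnt (set (f x)) (set (f y))) (set xs)"
  using assms by (induction xs) (auto simp: pairwise_insert disjnt_def)

lemma card_exchange: "y \<in> A \<Longrightarrow> x \<notin> A - {y} \<Longrightarrow> card (insert x (A - {y})) = card A"
  by (cases "finite A") (auto simp: card_insert_if card_gt_0_iff intro!: Suc_pred)

lemma precedes_mem:
  assumes "precedes x y a"
  shows "x \<in> set a" and "y \<in> set a"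
  using assms unfolding precedes_def by auto

lemma is_path_nonempty: "is_path A p \<Longrightarrow> fst p \<noteq> []"
  by (auto simp: is_path_def split: prod.splits)

lemma is_path_distinct_arcs: "is_path A p \<Longrightarrow> distinct (snd p)"
  by (auto simp: is_path_def split: prod.splits)

lemma is_path_restrict_arcs: "is_path A p \<Longrightarrow> set (snd p) \<subseteq> B \<Longrightarrow> is_path B p"
  by (auto simp: is_path_def split: prod.splits)

lemma is_path_snoc:
  assumes "xs \<noteq> []"
  shows "is_path A (xs @ [w], as @ [c]) \<longleftrightarrow>
    is_path A (xs, as) \<and> w \<notin> set xs \<and> c \<notin> set as \<and> c \<in> A \<and> precedes (last xs) w c"
proof -
  have "(\<forall>i < Suc (length as). precedes ((xs @ [w]) ! i) ((xs @ [w]) ! Suc i) ((as @ [c]) ! i)) \<longleftrightarrow>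
      (\<forall>i < length as. precedes (xs ! i) (xs ! Suc i) (as ! i)) \<and> precedes (last xs) w c"
    if len: "length as + 1 = length xs"
  proof -
    have "last xs = xs ! length as"
      using len[symmetric] assms by (simp add: last_conv_nth)
    then show ?thesis
      using len by (simp only: All_less_Suc) (auto simp: nth_append)
  qed
  then show ?thesis
    unfolding is_path_def by auto
qed

lemma is_path_cases_last:
  assumes "is_path A (ys, bs)"
  obtains "ys = [last ys]" and "bs = []"
    | ys0 bs0 b where "ys = ys0 @ [last ys]" and "bs = bs0 @ [b]" and "ys0 \<noteq> []"
proof (cases bs rule: rev_cases)
  case Nil
  then show ?thesis
    using assms that(1) unfolding is_path_def by (cases ys) auto
next
  case (snoc bs0 b)
  moreover have "length ys = length bs + 1"
    using assms by (simp add: is_path_def)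
  ultimately show ?thesis
    using that(2) by (cases ys rule: rev_cases) (auto simp flip: length_greater_0_conv)
qed

definition path_partition :: "'a set \<Rightarrow> 'a list set \<Rightarrow> ('a list \<times> 'a list list) set \<Rightarrow> bool" where
  "path_partition V A \<P> \<longleftrightarrow> (\<forall>p\<in>\<P>. is_path A p) \<and>
     pairwise (\<lambda>p q. disjnt (set (fst p)) (set (fst q)) \<and> disjnt (set (snd p)) (set (snd q))) \<P> \<and>
     (\<Union>p\<in>\<P>. set (fst p)) = V"

lemma path_cover_iff: "path_cover V A P \<longleftrightarrow> distinct P \<and> path_partition V A (set P)"
proof
  assume cover: "path_cover V A P"
  have paths: "\<forall>p\<in>set P. is_path A p"
    using cover by (simp add: path_cover_def)
  have disj: "disjnt (set (fst (P ! i))) (set (fst (P ! j)))"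
    if "i < length P" "j < length P" "i \<noteq> j" for i j
    using cover that by (simp add: path_cover_def disjnt_def)
  have "distinct P"
  proof (unfold distinct_conv_nth, intro allI impI)
    fix i j assume ij: "i < length P" "j < length P" "i \<noteq> j"
    have "fst (P ! i) \<noteq> []"
      using paths ij(1) is_path_nonempty nth_mem by blast
    then show "P ! i \<noteq> P ! j"
      using disj[OF ij] by auto
  qed
  moreover have "pairwise (\<lambda>p q. disjnt (set (fst p)) (set (fst q))) (set P)"
  proof (rule pairwiseI)
    fix p q assume "p \<in> set P" "q \<in> set P" "p \<noteq> q"
    then obtain i j where "i < length P" "j < length P" "i \<noteq> j" "p = P ! i" "q = P ! j"
      by (metis in_set_conv_nth)
    then show "disjnt (set (fst p)) (set (fst q))"
      using disj by blast
  qed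
  ultimately show "distinct P \<and> path_partition V A (set P)"
    using cover paths is_path_distinct_arcs distinct_concat_map_iff[of P snd]
    by (auto simp: path_cover_def path_partition_def pairwise_def)
next
  assume "distinct P \<and> path_partition V A (set P)"
  then show "path_cover V A P"
    using is_path_distinct_arcs distinct_concat_map_iff[of P snd]
    by (auto simp: path_cover_def path_partition_def pairwise_def disjnt_def nth_eq_iff_index_eq)
qed

definition terminals :: "('a list \<times> 'a list list) set \<Rightarrow> 'a set" where
  "terminals \<P> = (\<lambda>p. last (fst p)) ` \<P>"

lemma terminalsE:
  assumes "x \<in> terminals \<P>"
  obtains xs as where "(xs, as) \<in> \<P>" and "last xs = x"
  using assms unfolding terminals_def by (metis (no_types, lifting) imageE prod.collapse)

lemma path_partition_restrict_arcs:
  "path_partition V A \<P> \<Longrightarrow> (\<forall>p\<in>\<P>. set (snd p) \<subseteq> B) \<Longrightarrow> path_partition V B \<P>"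
  by (auto simp: path_partition_def intro: is_path_restrict_arcs)

lemma path_partition_vertices: "path_partition V A \<P> \<Longrightarrow> p \<in> \<P> \<Longrightarrow> set (fst p) \<subseteq> V"
  by (auto simp: path_partition_def)

lemma path_partition_arcs: "path_partition V A \<P> \<Longrightarrow> p \<in> \<P> \<Longrightarrow> set (snd p) \<subseteq> A"
  by (cases p) (auto simp: path_partition_def is_path_def)

lemma path_partition_last_in: "path_partition V A \<P> \<Longrightarrow> p \<in> \<P> \<Longrightarrow> last (fst p) \<in> set (fst p)"
  unfolding path_partition_def using is_path_nonempty last_in_set by blast

lemma path_partition_disjoint:
  "path_partition V A \<P> \<Longrightarrow> p \<in> \<P> \<Longrightarrow> q \<in> \<P> \<Longrightarrow> p \<noteq> q \<Longrightarrow> x \<in> set (fst p) \<Longrightarrow> x \<notin> set (fst q)"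
  by (auto simp: path_partition_def pairwise_def disjnt_def)

lemma path_partition_inj_on_last:
  assumes "path_partition V A \<P>"
  shows "inj_on (\<lambda>p. last (fst p)) \<P>"
proof (rule inj_onI)
  fix p q assume "p \<in> \<P>" "q \<in> \<P>" "last (fst p) = last (fst q)"
  then show "p = q"
    using path_partition_last_in[OF assms] path_partition_disjoint[OF assms] by metis
qed

lemma card_terminals: "path_partition V A \<P> \<Longrightarrow> card (terminals \<P>) = card \<P>"
  unfolding terminals_def by (rule card_image[OF path_partition_inj_on_last])

lemma terminals_subset: "path_partition V A \<P> \<Longrightarrow> terminals \<P> \<subseteq> V"
  unfolding terminals_def using path_partition_last_in path_partition_vertices by fast

lemma path_partition_finite: "finite V \<Longrightarrow> path_partition V A \<P> \<Longrightarrow> finite \<P>"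
  using finite_subset[OF terminals_subset] finite_imageD[OF _ path_partition_inj_on_last]
  unfolding terminals_def by blast

lemma terminals_remove:
  "path_partition V A \<P> \<Longrightarrow> p \<in> \<P> \<Longrightarrow> terminals (\<P> - {p}) = terminals \<P> - {last (fst p)}"
  unfolding terminals_def using inj_on_image_set_diff[OF path_partition_inj_on_last, of V A \<P> \<P> "{p}"]
  by simp

(* The i-th arc of a path contains its i-th vertex, which ends neither this path nor, by
disjointness, any other. *)
lemma arc_within_terminals_unused:
  assumes partition: "path_partition V A \<P>" and "set a \<subseteq> terminals \<P>" and "(xs, as) \<in> \<P>"
  shows "a \<notin> set as"
proof
  assume "a \<in> set as"
  then obtain t where t: "t < length as" "as ! t = a"
    by (meson in_set_conv_nth)
  have path: "is_path A (xs, as)"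
    using partition assms(3) by (simp add: path_partition_def)
  then have "precedes (xs ! t) (xs ! Suc t) a"
    using t by (auto simp: is_path_def)
  then have "xs ! t \<in> terminals \<P>"
    using assms(2) precedes_mem(1) by (metis subsetD)
  then obtain q where q: "q \<in> \<P>" "last (fst q) = xs ! t"
    unfolding terminals_def by auto
  have len: "length xs = Suc (length as)" "distinct xs"
    using path by (simp_all add: is_path_def)
  show False
  proof (cases "q = (xs, as)")
    case True
    then have "xs ! length as = xs ! t"
      using q(2) len True by (cases xs rule: rev_cases) (auto simp: nth_append)
    then show False
      using t(1) len by (simp add: nth_eq_iff_index_eq)
  next
    case False
    have "xs ! t \<in> set xs"
      using t(1) len(1) by simp
    then show False
      using path_partition_disjoint[OF partition q(1) assms(3) False] path_partition_last_in[OF partition q(1)]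
        q(2) by auto
  qed
qed

lemma path_partition_extend:
  assumes partition: "path_partition V (A - {c}) \<P>" and q: "(xs, as) \<in> \<P>"
    and "w \<notin> V" and "c \<in> A" and "precedes (last xs) w c"
  defines "\<P>' \<equiv> insert (xs @ [w], as @ [c]) (\<P> - {(xs, as)})"
  shows "path_partition (insert w V) A \<P>'" and "card \<P>' = card \<P>"
    and "terminals \<P>' = insert w (terminals \<P> - {last xs})"
proof -
  have partition_A: "path_partition V A \<P>"
    using path_partition_restrict_arcs[OF partition] path_partition_arcs[OF partition] by blast
  have unused: "c \<notin> set (snd p)" if "p \<in> \<P>" for p
    using path_partition_arcs[OF partition that] by blast
  have "xs \<noteq> []"
    using path_partition_last_in[OF partition q] by auto
  moreover have "w \<notin> set xs"
    using path_partition_vertices[OF partition q] \<open>w \<notin> V\<close> by auto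
  ultimately have new_path: "is_path A (xs @ [w], as @ [c])"
    using partition_A q unused[OF q] assms(4,5) is_path_snoc by (fastforce simp: path_partition_def)
  let ?R = "\<lambda>p q. disjnt (set (fst p)) (set (fst q)) \<and> disjnt (set (snd p)) (set (snd q))"
  have "?R (xs @ [w], as @ [c]) p \<and> ?R p (xs @ [w], as @ [c])" if p: "p \<in> \<P> - {(xs, as)}" for p
  proof -
    have "?R (xs, as) p"
      using partition q p by (auto simp: path_partition_def pairwise_def)
    moreover have "w \<notin> set (fst p)" "c \<notin> set (snd p)"
      using path_partition_vertices[OF partition DiffD1[OF p]] \<open>w \<notin> V\<close> unused p by auto
    ultimately show ?thesis
      by (auto simp: disjnt_def)
  qed
  moreover have "pairwise ?R (\<P> - {(xs, as)})"
    using partition pairwise_subset by (fastforce simp: path_partition_def)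
  moreover have "(\<Union>p\<in>\<P>'. set (fst p)) = insert w V"
    using partition q unfolding \<P>'_def path_partition_def by auto
  ultimately show "path_partition (insert w V) A \<P>'"
    using partition_A new_path unfolding \<P>'_def path_partition_def by (simp add: pairwise_insert)
  have new: "(xs @ [w], as @ [c]) \<notin> \<P>"
    using path_partition_vertices[OF partition] \<open>w \<notin> V\<close> by fastforce
  then show "card \<P>' = card \<P>"
    using card_exchange[OF q] unfolding \<P>'_def by simp
  show "terminals \<P>' = insert w (terminals \<P> - {last xs})"
    using terminals_remove[OF partition q] unfolding \<P>'_def terminals_def by simp
qed

lemma path_partition_remove_singleton:
  assumes partition: "path_partition V A \<P>" and single: "([w], []) \<in> \<P>"
  shows "path_partition (V - {w}) A (\<P> - {([w], [])})"
proof -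
  have "w \<notin> set (fst p)" if "p \<in> \<P> - {([w], [])}" for p
    using path_partition_disjoint[OF partition single, of p w] that by auto
  then have "(\<Union>p\<in>\<P> - {([w], [])}. set (fst p)) = V - {w}"
    using partition single by (auto simp: path_partition_def)
  then show ?thesis
    using partition pairwise_subset[of _ \<P> "\<P> - {([w], [])}"] by (auto simp: path_partition_def)
qed

lemma path_partition_truncate:
  assumes partition: "path_partition V A \<P>" and p: "(ys @ [w], bs @ [b]) \<in> \<P>" and "ys \<noteq> []"
  defines "\<P>' \<equiv> insert (ys, bs) (\<P> - {(ys @ [w], bs @ [b])})"
  shows "path_partition (V - {w}) (A - {b}) \<P>'" and "card \<P>' = card \<P>"
    and "terminals \<P>' = insert (last ys) (terminals \<P> - {w})"
proof -
  have "is_path A (ys @ [w], bs @ [b])"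
    using partition p by (simp add: path_partition_def)
  then have truncated: "is_path A (ys, bs)" "w \<notin> set ys" "b \<notin> set bs"
    using is_path_snoc[OF \<open>ys \<noteq> []\<close>] by simp_all
  have others: "disjnt (set (ys @ [w])) (set (fst q)) \<and> disjnt (set (bs @ [b])) (set (snd q))"
    if "q \<in> \<P> - {(ys @ [w], bs @ [b])}" for q
    using partition p that by (auto simp: path_partition_def pairwise_def)
  have old: "(ys, bs) \<notin> \<P> - {(ys @ [w], bs @ [b])}"
    using others \<open>ys \<noteq> []\<close> by (fastforce simp: disjnt_def)
  have "is_path (A - {b}) (ys, bs)"
    using truncated is_path_restrict_arcs[of A "(ys, bs)"] by (auto simp: is_path_def)
  moreover have "is_path (A - {b}) q" if q: "q \<in> \<P> - {(ys @ [w], bs @ [b])}" for q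
  proof (rule is_path_restrict_arcs)
    show "is_path A q"
      using partition q by (simp add: path_partition_def)
    show "set (snd q) \<subseteq> A - {b}"
      using path_partition_arcs[OF partition DiffD1[OF q]] others[OF q] by (auto simp: disjnt_def)
  qed
  moreover
  let ?R = "\<lambda>p q. disjnt (set (fst p)) (set (fst q)) \<and> disjnt (set (snd p)) (set (snd q))"
  have "?R (ys, bs) q \<and> ?R q (ys, bs)" if "q \<in> \<P> - {(ys @ [w], bs @ [b])}" for q
    using others[OF that] by (auto simp: disjnt_def)
  moreover have "pairwise ?R (\<P> - {(ys @ [w], bs @ [b])})"
    using partition pairwise_subset by (fastforce simp: path_partition_def)
  moreover have "(\<Union>p\<in>\<P>'. set (fst p)) = V - {w}"
    using partition p truncated(2) others unfolding \<P>'_def path_partition_def disjnt_def by auto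
  ultimately show "path_partition (V - {w}) (A - {b}) \<P>'"
    unfolding \<P>'_def path_partition_def by (simp add: pairwise_insert)
  show "card \<P>' = card \<P>"
    unfolding \<P>'_def by (rule card_exchange[OF p old])
  show "terminals \<P>' = insert (last ys) (terminals \<P> - {w})"
    using terminals_remove[OF partition p] unfolding \<P>'_def terminals_def by simp
qed

lemma unused_arc_between_terminals:
  assumes partition: "path_partition V A \<P>" and arcs: "\<forall>a\<in>A. 2 \<le> length a \<and> distinct a"
    and "\<not> independent A (terminals \<P>)"
  obtains a u w xs as ys bs where "a \<in> A" and "precedes u w a" and "u \<noteq> w"
    and "(xs, as) \<in> \<P>" and "last xs = u" and "(ys, bs) \<in> \<P>" and "last ys = w"
    and "path_partition V (A - {a}) \<P>"
proof -
  obtain a where a: "a \<in> A" "set a \<subseteq> terminals \<P>"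
    using assms(3) by (auto simp: independent_def)
  have len: "2 \<le> length a" and "distinct a"
    using arcs a(1) by auto
  then have lt: "0 < length a" "1 < length a"
    by linarith+
  then have "a ! 0 \<noteq> a ! 1"
    using nth_eq_iff_index_eq[OF \<open>distinct a\<close> lt] by simp
  moreover have "precedes (a ! 0) (a ! 1) a"
    unfolding precedes_def using len by (intro exI[of _ 0] exI[of _ 1]) simp
  moreover have "a ! 0 \<in> terminals \<P>" "a ! 1 \<in> terminals \<P>"
    using lt a(2) nth_mem by blast+
  moreover have "set (snd p) \<subseteq> A - {a}" if "p \<in> \<P>" for p
    using path_partition_arcs[OF partition that] arc_within_terminals_unused[OF partition a(2), of "fst p" "snd p"]
      that by auto
  then have "path_partition V (A - {a}) \<P>"
    using path_partition_restrict_arcs[OF partition] by blast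
  ultimately show ?thesis
    using that a(1) by (metis terminalsE)
qed

lemma path_partition_extend_at_terminal:
  assumes "path_partition V B \<P>" and "B \<subseteq> A - {c}" and "x \<in> terminals \<P>"
    and "w \<notin> V" and "c \<in> A" and "precedes x w c"
  obtains \<P>' where "path_partition (insert w V) A \<P>'" and "card \<P>' = card \<P>"
    and "terminals \<P>' = insert w (terminals \<P> - {x})"
proof -
  obtain xs as where "(xs, as) \<in> \<P>" and "last xs = x"
    using assms(3) by (rule terminalsE)
  moreover have "path_partition V (A - {c}) \<P>"
    using path_partition_restrict_arcs[OF assms(1)] path_partition_arcs[OF assms(1)] assms(2) by blast
  ultimately show ?thesis
    using path_partition_extend[of V A c \<P> xs as w] assms(4-6) that by blast
qed

lemma path_partition_merge_singleton:
  assumes partition: "path_partition V (A - {a}) \<P>" and single: "([w], []) \<in> \<P>"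
    and q: "q \<in> \<P>" "q \<noteq> ([w], [])" and "a \<in> A" and prec: "precedes (last (fst q)) w a"
    and "finite \<P>"
  shows "\<exists>\<Q>. path_partition V A \<Q> \<and> card \<Q> + 1 = card \<P> \<and> terminals \<Q> \<subseteq> terminals \<P>"
proof -
  have removed: "path_partition (V - {w}) (A - {a}) (\<P> - {([w], [])})"
    using partition single by (rule path_partition_remove_singleton)
  have q_in: "last (fst q) \<in> terminals (\<P> - {([w], [])})"
    using q unfolding terminals_def by blast
  have "w \<notin> V - {w}"
    by simp
  then obtain \<Q> where \<Q>: "path_partition (insert w (V - {w})) A \<Q>"
      "card \<Q> = card (\<P> - {([w], [])})" "terminals \<Q> = insert w (terminals (\<P> - {([w], [])}) - {last (fst q)})"
    by (rule path_partition_extend_at_terminal[OF removed order_refl q_in _ \<open>a \<in> A\<close> prec])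
  have "w \<in> V" "w \<in> terminals \<P>"
    using partition single unfolding path_partition_def terminals_def by force+
  moreover have "card \<Q> + 1 = card \<P>"
    using \<Q>(2) card_Suc_Diff1[OF \<open>finite \<P>\<close> single] by simp
  moreover have "terminals \<Q> \<subseteq> terminals \<P>"
    using \<Q>(3) \<open>w \<in> terminals \<P>\<close> unfolding terminals_def by blast
  ultimately show ?thesis
    using \<Q>(1) insert_Diff by metis
qed

lemma path_partition_reattach:
  assumes \<Q>: "path_partition (V - {w}) (A - {a} - {b}) \<Q>" and "w \<in> V" and "a \<in> A" and "b \<in> A"
    and "precedes u w a" and "precedes v w b" and ter: "terminals \<Q> \<subseteq> insert v (T - {w})"
    and "u \<in> T" and "w \<in> T" and "u \<noteq> w" and "finite T" and "card \<Q> + 1 = card T"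
  shows "\<exists>\<Q>'. path_partition V A \<Q>' \<and> card \<Q>' = card \<Q> \<and> terminals \<Q>' \<subseteq> T"
proof -
  have extend: "\<exists>\<Q>'. path_partition V A \<Q>' \<and> card \<Q>' = card \<Q> \<and> terminals \<Q>' \<subseteq> T"
    if x: "x \<in> terminals \<Q>" and arcs: "A - {a} - {b} \<subseteq> A - {c}" and c: "c \<in> A" "precedes x w c"
      and x_ter: "insert w (terminals \<Q> - {x}) \<subseteq> T" for x c
  proof -
    have "w \<notin> V - {w}"
      by simp
    then obtain \<Q>' where \<Q>': "path_partition (insert w (V - {w})) A \<Q>'" "card \<Q>' = card \<Q>"
        "terminals \<Q>' = insert w (terminals \<Q> - {x})"
      by (rule path_partition_extend_at_terminal[OF \<Q> arcs x _ c])
    then show ?thesis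
      using x_ter insert_Diff[OF \<open>w \<in> V\<close>] by (intro exI[of _ \<Q>']) auto
  qed
  consider "v \<in> terminals \<Q>" | "u \<in> terminals \<Q>" "v \<notin> terminals \<Q>" | "terminals \<Q> \<subseteq> T - {u, w}"
    using ter by blast
  then show ?thesis
  proof cases
    case 1
    then show ?thesis
      using extend[of v b] assms(4,6,9) ter by blast
  next
    case 2
    then show ?thesis
      using extend[of u a] assms(3,5,9) ter by blast
  next
    case 3
    have "card \<Q> = card (terminals \<Q>)"
      using card_terminals[OF \<Q>] by simp
    also have "\<dots> \<le> card (T - {u, w})"
      using 3 \<open>finite T\<close> by (simp add: card_mono)
    finally have "card \<Q> + 2 \<le> card T"
      using assms(8-11) card_Diff_subset[of "{u, w}" T] card_mono[of T "{u, w}"] by simp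
    then show ?thesis
      using assms(12) by simp
  qed
qed

lemma independent_diff_arcs:
  assumes "independent (A - B) I" and "w \<notin> I" and "\<forall>b\<in>B. w \<in> set b"
  shows "independent A I"
  using assms unfolding independent_def by blast

lemma path_partition_shrink:
  assumes "finite V" and "\<forall>a\<in>A. 2 \<le> length a \<and> distinct a" and "path_partition V A \<P>"
    and "\<And>I. I \<subseteq> V \<Longrightarrow> independent A I \<Longrightarrow> card I < card \<P>"
  shows "\<exists>\<Q>. path_partition V A \<Q> \<and> card \<Q> + 1 = card \<P> \<and> terminals \<Q> \<subseteq> terminals \<P>"
  using assms
proof (induction "card V" arbitrary: V A \<P> rule: less_induct)
  case less
  note partition = less.prems(3)
  have "\<not> independent A (terminals \<P>)"
    using less.prems(4)[OF terminals_subset[OF partition]] card_terminals[OF partition] by auto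
  then obtain a u w xs as ys bs where a: "a \<in> A" "precedes u w a" "u \<noteq> w"
    and pi: "(xs, as) \<in> \<P>" "last xs = u" and pj: "(ys, bs) \<in> \<P>" "last ys = w"
    and partition_a: "path_partition V (A - {a}) \<P>"
    using unused_arc_between_terminals[OF partition less.prems(2)] by metis
  have ter: "u \<in> terminals \<P>" "w \<in> terminals \<P>"
    using pi pj unfolding terminals_def by force+
  have "w \<in> V" "w \<in> set a"
    using ter(2) terminals_subset[OF partition] precedes_mem(2)[OF a(2)] by auto
  have "finite \<P>"
    using less.prems(1) partition by (rule path_partition_finite)
  have "is_path A (ys, bs)"
    using partition pj(1) by (simp add: path_partition_def)
  then show ?case
  proof (cases rule: is_path_cases_last)
    case 1
    moreover have "(xs, as) \<noteq> ([w], [])"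
      using pi(2) a(3) by auto
    ultimately show ?thesis
      using path_partition_merge_singleton[OF partition_a _ pi(1) _ a(1)] pj a(2) pi(2) \<open>finite \<P>\<close> by simp
  next
    case (2 ys0 bs0 b)
    then have "b \<in> A" and b_prec: "precedes (last ys0) w b"
      using \<open>is_path A (ys, bs)\<close> is_path_snoc[OF \<open>ys0 \<noteq> []\<close>] pj(2) by simp_all
    \<comment> \<open>Deleting a and b keeps the smaller partition off both arcs, so w can be reattached by either.\<close>
    let ?\<P>0 = "insert (ys0, bs0) (\<P> - {(ys, bs)})"
    have \<P>0: "path_partition (V - {w}) (A - {a} - {b}) ?\<P>0" "card ?\<P>0 = card \<P>"
        "terminals ?\<P>0 = insert (last ys0) (terminals \<P> - {w})"
      using path_partition_truncate[OF partition_a, of ys0 w bs0 b] pj 2 by simp_all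
    have "card I < card ?\<P>0" if "I \<subseteq> V - {w}" and "independent (A - {a} - {b}) I" for I
      using independent_diff_arcs[of A "{a, b}" I w] that \<open>w \<in> set a\<close> precedes_mem(2)[OF b_prec]
        less.prems(4) \<P>0(2) by (auto simp: set_diff_eq)
    moreover have "card (V - {w}) < card V"
      using less.prems(1) \<open>w \<in> V\<close> by (rule card_Diff1_less)
    ultimately obtain \<Q> where \<Q>: "path_partition (V - {w}) (A - {a} - {b}) \<Q>" "card \<Q> + 1 = card \<P>"
        "terminals \<Q> \<subseteq> insert (last ys0) (terminals \<P> - {w})"
      using less.hyps[of "V - {w}" "A - {a} - {b}" ?\<P>0] less.prems(1,2) \<P>0 by auto
    then show ?thesis
      using path_partition_reattach[OF \<Q>(1) \<open>w \<in> V\<close> a(1) \<open>b \<in> A\<close> a(2) b_prec \<Q>(3)] ter a(3)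
        \<open>finite \<P>\<close> card_terminals[OF partition] by (metis finite_imageI terminals_def)
  qed
qed

lemma path_partition_imp_path_cover:
  assumes "finite \<P>" and "path_partition V A \<P>"
  obtains P where "path_cover V A P" and "length P = card \<P>"
proof -
  obtain P where "set P = \<P>" and "distinct P"
    using finite_distinct_list[OF assms(1)] by blast
  then show ?thesis
    using that assms(2) path_cover_iff distinct_card by metis
qed

lemma path_partition_singletons: "path_partition V A ((\<lambda>v. ([v], [])) ` V)"
  by (auto simp: path_partition_def is_path_def pairwise_def disjnt_def)

lemma pc_le_card:
  assumes "finite \<P>" and "path_partition V A \<P>"
  shows "pc V A \<le> card \<P>"
proof -
  obtain P where "path_cover V A P" and "length P = card \<P>"
    using path_partition_imp_path_cover[OF assms] .
  then show ?thesis
    unfolding pc_def by (intro Least_le) blast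
qed

lemma pc_attained:
  assumes "finite V"
  obtains \<P> where "path_partition V A \<P>" and "card \<P> = pc V A"
proof -
  have "finite ((\<lambda>v. ([v], [])) ` V)"
    using assms by simp
  then obtain P0 where "path_cover V A P0"
    using path_partition_imp_path_cover[OF _ path_partition_singletons] by blast
  then have "\<exists>P. path_cover V A P \<and> length P = pc V A"
    unfolding pc_def by (intro LeastI_ex[where P = "\<lambda>m. \<exists>P. path_cover V A P \<and> length P = m"]) blast
  then obtain P where "path_cover V A P" and "length P = pc V A"
    by blast
  then show ?thesis
    using that path_cover_iff distinct_card by metis
qed

lemma card_le_alpha:
  assumes "finite V" and "I \<subseteq> V" and "independent A I"
  shows "card I \<le> alpha V A"
proof -
  have "{card I |I. I \<subseteq> V \<and> independent A I} \<subseteq> card ` Pow V"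
    by auto
  then have "finite {card I |I. I \<subseteq> V \<and> independent A I}"
    using assms(1) finite_subset by blast
  then show ?thesis
    unfolding alpha_def using assms by (auto intro: Max_ge)
qed

theorem theorem8:
  fixes V :: "'a set" and A :: "'a list set" and k :: nat
  assumes "hyperdigraph k V A"
  shows "pc V A \<le> alpha V A"
proof -
  have "finite V" and arcs: "\<forall>a\<in>A. 2 \<le> length a \<and> distinct a"
    using assms unfolding hyperdigraph_def by auto
  obtain \<P> where \<P>: "path_partition V A \<P>" "card \<P> = pc V A"
    using pc_attained[OF \<open>finite V\<close>] by blast
  show ?thesis
  proof (rule ccontr)
    assume "\<not> pc V A \<le> alpha V A"
    then have "card I < card \<P>" if "I \<subseteq> V" and "independent A I" for I
      using card_le_alpha[OF \<open>finite V\<close> that] \<P>(2) by simp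
    then obtain \<Q> where "path_partition V A \<Q>" and "card \<Q> + 1 = card \<P>"
      using path_partition_shrink[OF \<open>finite V\<close> arcs \<P>(1)] by blast
    then show False
      using pc_le_card[OF path_partition_finite[OF \<open>finite V\<close>]] \<P>(2) by fastforce
  qed
qed

end
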